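(* Let $V$ be a finite set with $K = |V| \geq 1$ elements, let $\epsilon \geq 0$, and let $f : 2^V \to \mathbb{R}_{\geq 0}$. Then the $\epsilon$-pruning $\tilde f$ of $f$ is $\epsilon$-close to $f$; that is, for all $T, U \subseteq V$ with $|T| \leq 1$, $$(1-\epsilon)\, f[T,U] \;\leq\; \tilde f[T,U] \;\leq\; f[T,U].$$
   Context: For $g : 2^V \to \mathbb{R}_{\geq 0}$ and $T, U \subseteq V$, the interval sum is $g[T,U] := \sum_{S:\, T \subseteq S \subseteq U} g(S)$ (an empty sum, equal to $0$, if $T \not\subseteq U$). A function $\tilde f : 2^V \to \mathbb{R}_{\geq 0}$ is called $\epsilon$-close to $f$ if $(1-\epsilon) f[T,U] \leq \tilde f[T,U] \leq f[T,U]$ for all $T,U \subseteq V$ with $|T| \leq 1$. For $j \in S \subseteq V$ define $$\psi(j,S) = \sum_{R:\, j \in R \subseteq S} f(R)\,\bigl(1 + 1/K\bigr)^{|R|-K}\, K^{|R|-|S|}.$$ The $\epsilon$-pruning of $f$ is the function $\tilde f : 2^V \to \mathbb{R}_{\geq 0}$ given by $\tilde f(S) = 0$ if $S \neq \emptyset$ and $f(S) < \epsilon \cdot \psi(j,S)$ for every $j \in S$, and $\tilde f(S) = f(S)$ otherwise (in particular $\tilde f(\emptyset) = f(\emptyset)$). *)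

theory Defs
  imports Complex_Main
begin

text \<open>Interval sum g[T,U] = sum of g(S) over T \<subseteq> S \<subseteq> U (empty sum if T is not a subset of U).\<close>
definition interval_sum :: "('a set \<Rightarrow> real) \<Rightarrow> 'a set \<Rightarrow> 'a set \<Rightarrow> real" where
  "interval_sum g T U = (\<Sum>S\<in>{S. T \<subseteq> S \<and> S \<subseteq> U}. g S)"

definition psi :: "'a set \<Rightarrow> ('a set \<Rightarrow> real) \<Rightarrow> 'a \<Rightarrow> 'a set \<Rightarrow> real" where
  "psi V f j S = (let K = real (card V) in
     (\<Sum>R\<in>{R. j \<in> R \<and> R \<subseteq> S}.
        f R * (1 + 1 / K) powi (int (card R) - int (card V)) * K powi (int (card R) - int (card S))))"

definition eps_pruning :: "'a set \<Rightarrow> real \<Rightarrow> ('a set \<Rightarrow> real) \<Rightarrow> 'a set \<Rightarrow> real" where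
  "eps_pruning V \<epsilon> f S = (if S \<noteq> {} \<and> (\<forall>j\<in>S. f S < \<epsilon> * psi V f j S) then 0 else f S)"

definition eps_close :: "'a set \<Rightarrow> real \<Rightarrow> ('a set \<Rightarrow> real) \<Rightarrow> ('a set \<Rightarrow> real) \<Rightarrow> bool" where
  "eps_close V \<epsilon> f ft = (\<forall>T U. T \<subseteq> V \<and> U \<subseteq> V \<and> card T \<le> 1 \<longrightarrow>
      (1 - \<epsilon>) * interval_sum f T U \<le> interval_sum ft T U \<and> interval_sum ft T U \<le> interval_sum f T U)"

end

(*
  Write K = card V and phi_T(S) for the interval sum over R in [T,S] of f(R) weighted as in psi.
  If |T| <= 1 and S in [T,U] is pruned, then some j in S has T a subset of {j}, so the loss
  f(S) is below eps * psi(j,S) <= eps * phi_T(S). Summing phi_T(S) over S in [T,U] and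
  exchanging the two sums, the inner sum over S in [R,U] of K^(|R|-|S|) is (1 + 1/K)^(|U|-|R|)
  by the binomial theorem, so the total equals (1 + 1/K)^(|U|-K) f[T,U] <= f[T,U].
  Hence the total loss on [T,U] is at most eps f[T,U].
*)
theory Submission
  imports Defs
begin

definition psi_weight :: "'a set \<Rightarrow> 'a set \<Rightarrow> 'a set \<Rightarrow> real" where
  "psi_weight V R S = (1 + 1 / real (card V)) powi (int (card R) - int (card V))
     * real (card V) powi (int (card R) - int (card S))"

lemma psi_eq_interval_sum: "psi V f j S = interval_sum (\<lambda>R. f R * psi_weight V R S) {j} S"
  unfolding psi_def psi_weight_def interval_sum_def Let_def by (simp add: mult.assoc)

lemma psi_weight_nonneg: "0 \<le> psi_weight V R S"
  unfolding psi_weight_def by simp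

lemma power_int_diff_of_nat:
  fixes y :: "'a :: field"
  assumes "a \<le> b"
  shows "y powi (int a - int b) = inverse y ^ (b - a)"
  using assms by (simp add: power_int_def nat_diff_distrib)

lemma finite_interval_sets: "finite U \<Longrightarrow> finite {S. T \<subseteq> S \<and> S \<subseteq> U}"
  by (rule finite_subset[of _ "Pow U"]) auto

lemma interval_sum_mono:
  "(\<And>S. T \<subseteq> S \<Longrightarrow> S \<subseteq> U \<Longrightarrow> g S \<le> h S) \<Longrightarrow> interval_sum g T U \<le> interval_sum h T U"
  unfolding interval_sum_def by (rule sum_mono) auto

lemma interval_sum_cong:
  "(\<And>S. T \<subseteq> S \<Longrightarrow> S \<subseteq> U \<Longrightarrow> g S = h S) \<Longrightarrow> interval_sum g T U = interval_sum h T U"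
  unfolding interval_sum_def by (rule sum.cong) auto

lemma interval_sum_diff:
  "interval_sum (\<lambda>S. g S - h S) T U = interval_sum g T U - interval_sum h T U"
  unfolding interval_sum_def by (rule sum_subtractf)

lemma interval_sum_cmult: "interval_sum (\<lambda>S. c * g S) T U = c * interval_sum g T U"
  unfolding interval_sum_def by (rule sum_distrib_left[symmetric])

lemma interval_sum_antimono_lower:
  assumes "finite U" "T \<subseteq> T'" "\<And>S. T \<subseteq> S \<Longrightarrow> S \<subseteq> U \<Longrightarrow> 0 \<le> g S"
  shows "interval_sum g T' U \<le> interval_sum g T U"
  unfolding interval_sum_def
  by (rule sum_mono2) (use assms finite_interval_sets in auto)

lemma interval_sum_swap:
  assumes "finite U"
  shows "interval_sum (\<lambda>S. interval_sum (\<lambda>R. g R S) T S) T U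
       = interval_sum (\<lambda>R. interval_sum (g R) R U) T U"
proof -
  let ?I = "{S. T \<subseteq> S \<and> S \<subseteq> U}"
  have "interval_sum (\<lambda>S. interval_sum (\<lambda>R. g R S) T S) T U
      = (\<Sum>S\<in>?I. \<Sum>R | R \<in> ?I \<and> R \<subseteq> S. g R S)"
    unfolding interval_sum_def by (intro sum.cong refl arg_cong2[where f = sum]) auto
  also have "\<dots> = (\<Sum>R\<in>?I. \<Sum>S | S \<in> ?I \<and> R \<subseteq> S. g R S)"
    by (rule sum.swap_restrict[OF finite_interval_sets[OF assms] finite_interval_sets[OF assms]])
  also have "\<dots> = interval_sum (\<lambda>R. interval_sum (g R) R U) T U"
    unfolding interval_sum_def by (intro sum.cong refl arg_cong2[where f = sum]) auto
  finally show ?thesis .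
qed

lemma sum_Pow_power_card:
  fixes x :: "'a :: comm_semiring_1"
  assumes "finite W"
  shows "(\<Sum>A\<in>Pow W. x ^ card A) = (1 + x) ^ card W"
  using prod_add[OF assms, of "\<lambda>_. x" "\<lambda>_. 1"] by (simp add: add.commute)

lemma interval_sum_power_card_diff:
  fixes x :: real
  assumes "finite U" "R \<subseteq> U"
  shows "interval_sum (\<lambda>S. x ^ (card S - card R)) R U = (1 + x) ^ (card U - card R)"
proof -
  have "interval_sum (\<lambda>S. x ^ (card S - card R)) R U = (\<Sum>A\<in>Pow (U - R). x ^ card A)"
    unfolding interval_sum_def
  proof (rule sum.reindex_bij_witness[where i = "\<lambda>A. R \<union> A" and j = "\<lambda>S. S - R"])
    fix S assume "S \<in> {S. R \<subseteq> S \<and> S \<subseteq> U}"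
    then show "x ^ card (S - R) = x ^ (card S - card R)"
      using assms by (simp add: card_Diff_subset finite_subset)
  qed (use assms in auto)
  also have "\<dots> = (1 + x) ^ (card U - card R)"
    using assms by (simp add: sum_Pow_power_card card_Diff_subset finite_subset)
  finally show ?thesis .
qed

lemma interval_sum_psi_weight:
  assumes "finite U" "R \<subseteq> U"
  shows "interval_sum (psi_weight V R) R U = (1 + 1 / real (card V)) powi (int (card U) - int (card V))"
proof -
  define b where "b = 1 + 1 / real (card V)"
  have "b > 0" unfolding b_def by (simp add: add_pos_nonneg)
  have "interval_sum (psi_weight V R) R U
      = interval_sum (\<lambda>S. b powi (int (card R) - int (card V)) * (b - 1) ^ (card S - card R)) R U"
    unfolding interval_sum_def
  proof (rule sum.cong)
    fix S assume "S \<in> {S. R \<subseteq> S \<and> S \<subseteq> U}"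
    then have "card R \<le> card S" using assms by (auto intro: card_mono finite_subset)
    then show "psi_weight V R S = b powi (int (card R) - int (card V)) * (b - 1) ^ (card S - card R)"
      unfolding psi_weight_def b_def by (simp add: power_int_diff_of_nat inverse_eq_divide)
  qed simp
  also have "\<dots> = b powi (int (card R) - int (card V)) * b ^ (card U - card R)"
    using assms by (simp add: interval_sum_cmult interval_sum_power_card_diff)
  also have "\<dots> = b powi (int (card U) - int (card V))"
  proof -
    have "card R \<le> card U" using assms by (simp add: card_mono)
    then have "b ^ (card U - card R) = b powi (int (card U) - int (card R))"
      by (simp add: power_int_def nat_diff_distrib)
    then show ?thesis using \<open>b > 0\<close> by (simp flip: power_int_add)
  qed
  finally show ?thesis unfolding b_def .
qed

lemma interval_sum_psi_weight_le:
  assumes "finite V" "U \<subseteq> V" "\<And>S. S \<subseteq> U \<Longrightarrow> 0 \<le> f S"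
  shows "interval_sum (\<lambda>S. interval_sum (\<lambda>R. f R * psi_weight V R S) T S) T U \<le> interval_sum f T U"
proof -
  define b where "b = 1 + 1 / real (card V)"
  have "finite U" using assms finite_subset by blast
  have "b powi (int (card U) - int (card V)) \<le> b powi 0"
    using assms by (intro power_int_increasing) (auto simp: b_def card_mono)
  then have b_le: "b powi (int (card U) - int (card V)) \<le> 1" by simp
  have "interval_sum (\<lambda>S. interval_sum (\<lambda>R. f R * psi_weight V R S) T S) T U
      = interval_sum (\<lambda>R. f R * interval_sum (psi_weight V R) R U) T U"
    using \<open>finite U\<close> by (simp add: interval_sum_swap interval_sum_cmult)
  also have "\<dots> = interval_sum (\<lambda>R. b powi (int (card U) - int (card V)) * f R) T U"
    using \<open>finite U\<close> by (intro interval_sum_cong) (simp add: interval_sum_psi_weight b_def)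
  also have "\<dots> \<le> interval_sum f T U"
    using assms(3) b_le by (intro interval_sum_mono mult_left_le_one_le) (auto simp: b_def)
  finally show ?thesis .
qed

lemma eps_pruning_le: "0 \<le> f S \<Longrightarrow> eps_pruning V \<epsilon> f S \<le> f S"
  unfolding eps_pruning_def by simp

lemma eps_pruning_loss_le:
  assumes "finite S" "T \<subseteq> S" "card T \<le> 1" "0 \<le> \<epsilon>" "\<And>R. R \<subseteq> S \<Longrightarrow> 0 \<le> f R"
  shows "f S - eps_pruning V \<epsilon> f S \<le> \<epsilon> * interval_sum (\<lambda>R. f R * psi_weight V R S) T S"
proof (cases "S \<noteq> {} \<and> (\<forall>j\<in>S. f S < \<epsilon> * psi V f j S)")
  case False
  have "0 \<le> interval_sum (\<lambda>R. f R * psi_weight V R S) T S"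
    unfolding interval_sum_def
    by (intro sum_nonneg mult_nonneg_nonneg) (auto simp: assms(5) psi_weight_nonneg)
  then show ?thesis using False assms(4) unfolding eps_pruning_def by auto
next
  case True
  have "\<exists>j\<in>S. T \<subseteq> {j}"
  proof (cases "T = {}")
    case False
    then obtain k where "k \<in> T" by blast
    moreover have "\<forall>a\<in>T. \<forall>b\<in>T. a = b"
      using assms(3) card_le_Suc0_iff_eq[OF finite_subset[OF assms(2,1)]] by simp
    ultimately show ?thesis using assms(2) by blast
  qed (use True in auto)
  then obtain j where "j \<in> S" "T \<subseteq> {j}" by blast
  have "f S < \<epsilon> * interval_sum (\<lambda>R. f R * psi_weight V R S) {j} S"
    using True \<open>j \<in> S\<close> by (simp add: psi_eq_interval_sum)
  also have "\<dots> \<le> \<epsilon> * interval_sum (\<lambda>R. f R * psi_weight V R S) T S"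
    using assms \<open>T \<subseteq> {j}\<close>
    by (intro mult_left_mono interval_sum_antimono_lower mult_nonneg_nonneg psi_weight_nonneg) auto
  finally show ?thesis using True unfolding eps_pruning_def by simp
qed

theorem theorem1:
  fixes V :: "'a set" and \<epsilon> :: real and f :: "'a set \<Rightarrow> real"
  assumes "finite V" and "card V \<ge> 1" and "\<epsilon> \<ge> 0"
    and "\<And>S. S \<subseteq> V \<Longrightarrow> f S \<ge> 0"
  shows "eps_close V \<epsilon> f (eps_pruning V \<epsilon> f)"
  unfolding eps_close_def
proof (intro allI impI conjI)
  fix T U assume TU: "T \<subseteq> V \<and> U \<subseteq> V \<and> card T \<le> 1"
  have f_nonneg: "0 \<le> f S" if "S \<subseteq> U" for S using assms(4) TU that by auto
  have "finite U" using assms(1) TU finite_subset by blast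
  show "interval_sum (eps_pruning V \<epsilon> f) T U \<le> interval_sum f T U"
    by (intro interval_sum_mono eps_pruning_le f_nonneg)
  have "interval_sum f T U - interval_sum (eps_pruning V \<epsilon> f) T U
      = interval_sum (\<lambda>S. f S - eps_pruning V \<epsilon> f S) T U"
    by (simp add: interval_sum_diff)
  also have "\<dots> \<le> interval_sum (\<lambda>S. \<epsilon> * interval_sum (\<lambda>R. f R * psi_weight V R S) T S) T U"
    using TU assms(3) f_nonneg
    by (intro interval_sum_mono eps_pruning_loss_le) (auto intro: finite_subset[OF _ \<open>finite U\<close>])
  also have "\<dots> \<le> \<epsilon> * interval_sum f T U"
    using TU assms(1,3) f_nonneg
    by (simp add: interval_sum_cmult interval_sum_psi_weight_le mult_left_mono)
  finally show "(1 - \<epsilon>) * interval_sum f T U \<le> interval_sum (eps_pruning V \<epsilon> f) T U"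
    by (simp add: algebra_simps)
qed

end
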